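(* The set $\{\mathcal A_p\mid p \text{ a prime number}\}$, the variety $\mathcal{SL}$ and the variety $\mathcal{ZM}$ are each definable in $\mathbf{Com}$.
   Context: $\mathbf{Com}$ denotes the lattice of all commutative semigroup varieties with join $\vee$ and meet $\wedge$; a subset (or element) of a lattice $L$ is definable in $L$ if it is the set of elements satisfying some first-order formula with one free variable in the language $\{\vee,\wedge\}$. $\operatorname{var}\Sigma$ denotes the variety defined by identities $\Sigma$; $w=0$ (with $x$ not occurring in $w$) stands for $wx=xw=w$. $\mathcal A_n=\operatorname{var}\{x^ny=y,\ xy=yx\}$, $\mathcal{SL}=\operatorname{var}\{x^2=x,\ xy=yx\}$ (semilattices), $\mathcal{ZM}=\operatorname{var}\{xy=0\}$ (null semigroups). *)

theory Defs
  imports Main "HOL-Library.Multiset" "HOL-Computational_Algebra.Primes"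
begin

text \<open>Elements of the free commutative semigroup on countably many letters
  x_0, x_1, ...: nonempty finite multisets of variable indices; product is
  multiset sum.\<close>

definition cwords :: "nat multiset set" where
  "cwords = {w. w \<noteq> {#}}"

definition subst_word :: "(nat \<Rightarrow> nat multiset) \<Rightarrow> nat multiset \<Rightarrow> nat multiset" where
  "subst_word \<sigma> w = sum_mset (image_mset \<sigma> w)"

text \<open>Equational theories of commutative semigroup varieties =
  fully invariant congruences on the free commutative semigroup.\<close>
definition is_eq_theory :: "(nat multiset \<times> nat multiset) set \<Rightarrow> bool" where
  "is_eq_theory T \<longleftrightarrow>
     T \<subseteq> cwords \<times> cwords \<and>
     (\<forall>w\<in>cwords. (w, w) \<in> T) \<and>
     (\<forall>a b. (a, b) \<in> T \<longrightarrow> (b, a) \<in> T) \<and>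
     (\<forall>a b c. (a, b) \<in> T \<longrightarrow> (b, c) \<in> T \<longrightarrow> (a, c) \<in> T) \<and>
     (\<forall>a b c. (a, b) \<in> T \<longrightarrow> c \<in> cwords \<longrightarrow> (a + c, b + c) \<in> T) \<and>
     (\<forall>\<sigma> a b. (\<forall>i. \<sigma> i \<in> cwords) \<longrightarrow> (a, b) \<in> T \<longrightarrow>
                 (subst_word \<sigma> a, subst_word \<sigma> b) \<in> T)"

text \<open>A commutative semigroup variety is represented by its equational theory.
  var Sigma (together with xy = yx, which is built in) is represented by the
  equational theory generated by Sigma.\<close>
definition var_of :: "(nat multiset \<times> nat multiset) set \<Rightarrow> (nat multiset \<times> nat multiset) set" where
  "var_of \<Sigma> = \<Inter> {T. is_eq_theory T \<and> \<Sigma> \<subseteq> T}"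

text \<open>The lattice Com: carrier = all commutative semigroup varieties (as theories);
  join of varieties = intersection of theories, meet of varieties = theory
  generated by the union of the theories.\<close>
definition Com :: "(nat multiset \<times> nat multiset) set set" where
  "Com = {T. is_eq_theory T}"

definition com_join :: "(nat multiset \<times> nat multiset) set \<Rightarrow> (nat multiset \<times> nat multiset) set \<Rightarrow> (nat multiset \<times> nat multiset) set" where
  "com_join V W = V \<inter> W"

definition com_meet :: "(nat multiset \<times> nat multiset) set \<Rightarrow> (nat multiset \<times> nat multiset) set \<Rightarrow> (nat multiset \<times> nat multiset) set" where
  "com_meet V W = var_of (V \<union> W)"

text \<open>x = x_0, y = x_1, z = x_2.\<close>

definition A_var :: "nat \<Rightarrow> (nat multiset \<times> nat multiset) set" where
  "A_var n = var_of {(replicate_mset n 0 + {#1#}, {#1#})}"   (* x^n y = y *)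

definition SL_var :: "(nat multiset \<times> nat multiset) set" where
  "SL_var = var_of {({#0, 0#}, {#0#})}"                      (* x^2 = x *)

definition ZM_var :: "(nat multiset \<times> nat multiset) set" where
  "ZM_var = var_of {({#0, 1, 2#}, {#0, 1#})}"                (* xy = 0, i.e. xyz = zxy = xy *)

datatype lterm = LVar nat | LJoin lterm lterm | LMeet lterm lterm

datatype lform =
    FEq lterm lterm
  | FNot lform
  | FAnd lform lform
  | FOr lform lform
  | FEx nat lform
  | FAll nat lform

fun tvars :: "lterm \<Rightarrow> nat set" where
  "tvars (LVar i) = {i}"
| "tvars (LJoin s t) = tvars s \<union> tvars t"
| "tvars (LMeet s t) = tvars s \<union> tvars t"

fun fvars :: "lform \<Rightarrow> nat set" where
  "fvars (FEq s t) = tvars s \<union> tvars t"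
| "fvars (FNot f) = fvars f"
| "fvars (FAnd f g) = fvars f \<union> fvars g"
| "fvars (FOr f g) = fvars f \<union> fvars g"
| "fvars (FEx i f) = fvars f - {i}"
| "fvars (FAll i f) = fvars f - {i}"

fun teval :: "('a \<Rightarrow> 'a \<Rightarrow> 'a) \<Rightarrow> ('a \<Rightarrow> 'a \<Rightarrow> 'a) \<Rightarrow> (nat \<Rightarrow> 'a) \<Rightarrow> lterm \<Rightarrow> 'a" where
  "teval J M e (LVar i) = e i"
| "teval J M e (LJoin s t) = J (teval J M e s) (teval J M e t)"
| "teval J M e (LMeet s t) = M (teval J M e s) (teval J M e t)"

fun fsat :: "'a set \<Rightarrow> ('a \<Rightarrow> 'a \<Rightarrow> 'a) \<Rightarrow> ('a \<Rightarrow> 'a \<Rightarrow> 'a) \<Rightarrow> (nat \<Rightarrow> 'a) \<Rightarrow> lform \<Rightarrow> bool" where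
  "fsat L J M e (FEq s t) = (teval J M e s = teval J M e t)"
| "fsat L J M e (FNot f) = (\<not> fsat L J M e f)"
| "fsat L J M e (FAnd f g) = (fsat L J M e f \<and> fsat L J M e g)"
| "fsat L J M e (FOr f g) = (fsat L J M e f \<or> fsat L J M e g)"
| "fsat L J M e (FEx i f) = (\<exists>a\<in>L. fsat L J M (e(i := a)) f)"
| "fsat L J M e (FAll i f) = (\<forall>a\<in>L. fsat L J M (e(i := a)) f)"

definition definable :: "'a set \<Rightarrow> ('a \<Rightarrow> 'a \<Rightarrow> 'a) \<Rightarrow> ('a \<Rightarrow> 'a \<Rightarrow> 'a) \<Rightarrow> 'a set \<Rightarrow> bool" where
  "definable L J M S \<longleftrightarrow> S \<subseteq> L \<and>
     (\<exists>\<phi>. fvars \<phi> \<subseteq> {0} \<and>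
        (\<forall>e. (\<forall>i. e i \<in> L) \<longrightarrow> (fsat L J M e \<phi> \<longleftrightarrow> e 0 \<in> S)))"

end

theory Submission
  imports Defs
begin

text \<open>Varieties are represented by their equational theories, so the order is reversed. Every
  proper theory lies below the theory of SL, of ZM or of some A_p (p prime), and these are
  maximal, so they are exactly the atoms of Com. The atoms are then told apart by their
  position in Com: every variety properly containing SL contains a second atom; ZM is the only
  atom of the variety xyzt = 0, which has the two incomparable subvarieties xyz = 0 and
  x^2 = xyzt = 0; A_p is the only atom of A_(p^2), but a variety whose only atom is A_p is
  some A_(p^k), and the subvarieties of A_(p^k) form a chain.\<close>

type_synonym identities = "(nat multiset \<times> nat multiset) set"

abbreviation X :: "nat multiset" where "X \<equiv> {#0#}"
abbreviation Y :: "nat multiset" where "Y \<equiv> {#1#}"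
abbreviation x_pow :: "nat \<Rightarrow> nat multiset" where "x_pow k \<equiv> replicate_mset k 0"
abbreviation y_pow :: "nat \<Rightarrow> nat multiset" where "y_pow k \<equiv> replicate_mset k 1"

lemma cwords_iff [simp]: "w \<in> cwords \<longleftrightarrow> w \<noteq> {#}"
  by (simp add: cwords_def)

lemma replicate_mset_add: "replicate_mset (m + n) a = replicate_mset m a + replicate_mset n a"
  by (simp add: multiset_eq_iff)

lemma repeat_replicate_mset [simp]: "repeat_mset k (replicate_mset n a) = replicate_mset (k * n) a"
  by (simp add: multiset_eq_iff)

lemma subst_word_empty [simp]: "subst_word \<sigma> {#} = {#}"
  by (simp add: subst_word_def)

lemma subst_word_add_mset [simp]: "subst_word \<sigma> (add_mset i u) = \<sigma> i + subst_word \<sigma> u"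
  by (simp add: subst_word_def)

lemma subst_word_plus [simp]: "subst_word \<sigma> (u + v) = subst_word \<sigma> u + subst_word \<sigma> v"
  by (simp add: subst_word_def)

lemma subst_word_replicate_mset [simp]:
  "subst_word \<sigma> (replicate_mset k i) = repeat_mset k (\<sigma> i)"
  by (induction k) auto

lemma subst_word_repeat_mset [simp]:
  "subst_word \<sigma> (repeat_mset k u) = repeat_mset k (subst_word \<sigma> u)"
  by (induction k) auto

lemma subst_word_nonempty: "(\<forall>i. \<sigma> i \<noteq> {#}) \<Longrightarrow> u \<noteq> {#} \<Longrightarrow> subst_word \<sigma> u \<noteq> {#}"
  by (induction u) auto

lemma subst_word_two_letters:
  "subst_word (\<lambda>k. if k = i then w1 else w2) u
     = repeat_mset (count u i) w1 + repeat_mset (size u - count u i) w2"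
proof (induction u)
  case (add x u)
  have "count u i \<le> size u" by (simp add: count_le_size)
  with add show ?case by (auto simp: Suc_diff_le)
qed simp

lemma subst_word_const: "subst_word (\<lambda>k. w) u = repeat_mset (size u) w"
  by (induction u) auto

lemma set_mset_subst_word: "set_mset (subst_word \<sigma> u) = (\<Union>i\<in>set_mset u. set_mset (\<sigma> i))"
  by (induction u) auto

lemma size_le_size_subst_word: "(\<forall>i. \<sigma> i \<noteq> {#}) \<Longrightarrow> size u \<le> size (subst_word \<sigma> u)"
proof (induction u)
  case (add x u)
  have "1 \<le> size (\<sigma> x)" using add.prems by (simp add: Suc_leI nonempty_has_size)
  with add show ?case by simp
qed simp

lemma le_size_subst_word: "(\<forall>i. \<sigma> i \<noteq> {#}) \<Longrightarrow> k \<le> size u \<Longrightarrow> k \<le> size (subst_word \<sigma> u)"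
  using size_le_size_subst_word order_trans by blast

lemma two_le_count_subst_word:
  assumes "2 \<le> count u i" "\<forall>k. \<sigma> k \<noteq> {#}"
  shows "\<exists>j. 2 \<le> count (subst_word \<sigma> u) j"
proof -
  have "replicate_mset 2 i \<subseteq># u" using assms(1) by (simp add: count_le_replicate_mset_subset_eq)
  then obtain r where "u = replicate_mset 2 i + r" by (rule subset_mset.less_eqE)
  then have r: "u = add_mset i (add_mset i r)" by (simp add: numeral_2_eq_2)
  obtain j where "j \<in># \<sigma> i" using assms(2) by blast
  then have "1 \<le> count (\<sigma> i) j" by (simp add: Suc_le_eq)
  moreover have "count (subst_word \<sigma> u) j = 2 * count (\<sigma> i) j + count (subst_word \<sigma> r) j"
    using r by simp
  ultimately have "2 \<le> count (subst_word \<sigma> u) j" by linarith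
  then show ?thesis ..
qed

lemma eq_theory_nonempty:
  assumes "is_eq_theory T" "(a, b) \<in> T" shows "a \<noteq> {#} \<and> b \<noteq> {#}"
proof -
  have "T \<subseteq> cwords \<times> cwords" using assms(1) unfolding is_eq_theory_def by (elim conjE)
  with assms(2) show ?thesis by auto
qed

lemma eq_theory_refl:
  assumes "is_eq_theory T" "w \<noteq> {#}" shows "(w, w) \<in> T"
proof -
  have "\<forall>w\<in>cwords. (w, w) \<in> T" using assms(1) unfolding is_eq_theory_def by (elim conjE)
  with assms(2) show ?thesis by simp
qed

lemma eq_theory_sym:
  assumes "is_eq_theory T" "(a, b) \<in> T" shows "(b, a) \<in> T"
proof -
  have "\<forall>a b. (a, b) \<in> T \<longrightarrow> (b, a) \<in> T" using assms(1) unfolding is_eq_theory_def by (elim conjE)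
  with assms(2) show ?thesis by blast
qed

lemma eq_theory_trans:
  assumes "is_eq_theory T" "(a, b) \<in> T" "(b, c) \<in> T" shows "(a, c) \<in> T"
proof -
  have "\<forall>a b c. (a, b) \<in> T \<longrightarrow> (b, c) \<in> T \<longrightarrow> (a, c) \<in> T"
    using assms(1) unfolding is_eq_theory_def by (elim conjE)
  with assms(2,3) show ?thesis by blast
qed

lemma eq_theory_subst:
  assumes "is_eq_theory T" "\<forall>i. \<sigma> i \<noteq> {#}" "(a, b) \<in> T"
  shows "(subst_word \<sigma> a, subst_word \<sigma> b) \<in> T"
proof -
  have "\<forall>\<sigma> a b. (\<forall>i. \<sigma> i \<in> cwords) \<longrightarrow> (a, b) \<in> T \<longrightarrow> (subst_word \<sigma> a, subst_word \<sigma> b) \<in> T"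
    using assms(1) unfolding is_eq_theory_def by (elim conjE)
  with assms(2,3) show ?thesis by simp
qed

lemma eq_theory_add_right:
  assumes "is_eq_theory T" "(a, b) \<in> T" shows "(a + c, b + c) \<in> T"
proof (cases "c = {#}")
  case False
  have "\<forall>a b c. (a, b) \<in> T \<longrightarrow> c \<in> cwords \<longrightarrow> (a + c, b + c) \<in> T"
    using assms(1) unfolding is_eq_theory_def by (elim conjE)
  with assms(2) False show ?thesis by simp
qed (use assms in simp)

lemma eq_theory_add_left: "is_eq_theory T \<Longrightarrow> (a, b) \<in> T \<Longrightarrow> (c + a, c + b) \<in> T"
  using eq_theory_add_right[of T a b c] by (simp add: add.commute)

lemma eq_theory_add:
  assumes T: "is_eq_theory T" and "(a, b) \<in> T" "(c, d) \<in> T" shows "(a + c, b + d) \<in> T"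
  using assms eq_theory_add_right[OF T] eq_theory_add_left[OF T] eq_theory_trans[OF T] by blast

lemma eq_theory_from_common_left:
  "is_eq_theory T \<Longrightarrow> (w, a) \<in> T \<Longrightarrow> (w, b) \<in> T \<Longrightarrow> (a, b) \<in> T"
  using eq_theory_sym eq_theory_trans by blast

definition full_theory :: identities where
  "full_theory = cwords \<times> cwords"

lemma eq_theory_full_theory: "is_eq_theory full_theory"
  unfolding is_eq_theory_def full_theory_def
  by (intro conjI allI impI ballI; simp add: subst_word_nonempty)

lemma le_full_theory: "is_eq_theory T \<Longrightarrow> T \<subseteq> full_theory"
  unfolding is_eq_theory_def full_theory_def by auto

lemma full_theory_if_X_Y:
  assumes T: "is_eq_theory T" and "(X, Y) \<in> T" shows "T = full_theory"
proof
  show "full_theory \<subseteq> T"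
  proof
    fix p assume "p \<in> full_theory"
    then obtain u v where p: "p = (u, v)" "u \<noteq> {#}" "v \<noteq> {#}"
      unfolding full_theory_def by auto
    let ?\<sigma> = "\<lambda>k. if k = 0 then u else v"
    have "(subst_word ?\<sigma> X, subst_word ?\<sigma> Y) \<in> T"
      by (rule eq_theory_subst[OF T]) (use p assms in auto)
    then show "p \<in> T" using p by simp
  qed
qed (rule le_full_theory[OF T])

lemma full_theory_if_XY_Y:
  assumes T: "is_eq_theory T" and XY: "(X + Y, Y) \<in> T" shows "T = full_theory"
proof -
  let ?\<sigma> = "\<lambda>k. if k = 0 then Y else X"
  have "(subst_word ?\<sigma> (X + Y), subst_word ?\<sigma> Y) \<in> T"
    by (rule eq_theory_subst[OF T]) (use XY in auto)
  then have "(X + Y, X) \<in> T" by (simp add: add.commute)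
  with XY have "(X, Y) \<in> T" using T eq_theory_sym eq_theory_trans by blast
  then show ?thesis using full_theory_if_X_Y T by blast
qed

lemma var_of_eqI:
  assumes "is_eq_theory A" "\<Sigma> \<subseteq> A" "\<And>T. is_eq_theory T \<Longrightarrow> \<Sigma> \<subseteq> T \<Longrightarrow> A \<subseteq> T"
  shows "var_of \<Sigma> = A"
  unfolding var_of_def using assms by blast

lemma var_of_least: "is_eq_theory T \<Longrightarrow> \<Sigma> \<subseteq> T \<Longrightarrow> var_of \<Sigma> \<subseteq> T"
  unfolding var_of_def by blast

definition semilattice_theory :: identities where
  "semilattice_theory = {(u, v). u \<noteq> {#} \<and> v \<noteq> {#} \<and> set_mset u = set_mset v}"

text \<open>Identities of the variety defined by w = 0 for all words w of length k.\<close>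
definition nil_theory :: "nat \<Rightarrow> identities" where
  "nil_theory k = {(u, v). u \<noteq> {#} \<and> v \<noteq> {#} \<and> (u = v \<or> (k \<le> size u \<and> k \<le> size v))}"

definition abelian_theory :: "nat \<Rightarrow> identities" where
  "abelian_theory m = {(u, v). u \<noteq> {#} \<and> v \<noteq> {#} \<and> (\<forall>i. count u i mod m = count v i mod m)}"

definition sq_nil_word :: "nat multiset \<Rightarrow> bool" where
  "sq_nil_word u \<longleftrightarrow> 4 \<le> size u \<or> (\<exists>i. 2 \<le> count u i)"

text \<open>Identities of the variety defined by x^2 = 0 and xyzt = 0.\<close>
definition sq_nil_theory :: identities where
  "sq_nil_theory = {(u, v). u \<noteq> {#} \<and> v \<noteq> {#} \<and> (u = v \<or> (sq_nil_word u \<and> sq_nil_word v))}"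

definition group_identity :: "nat \<Rightarrow> nat multiset \<times> nat multiset" where
  "group_identity m = (x_pow m + Y, Y)"

lemma eq_theory_semilattice_theory: "is_eq_theory semilattice_theory"
  unfolding is_eq_theory_def semilattice_theory_def
  by (intro conjI allI impI ballI; auto simp: set_mset_subst_word subst_word_nonempty)

lemma eq_theory_nil_theory: "is_eq_theory (nil_theory k)"
  unfolding is_eq_theory_def nil_theory_def
  by (intro conjI allI impI ballI; auto simp: subst_word_nonempty le_size_subst_word)

lemma sq_nil_word_add: "sq_nil_word u \<Longrightarrow> sq_nil_word (u + c)"
  unfolding sq_nil_word_def by (auto, metis le_add1 order.trans count_union)

lemma sq_nil_word_subst: "\<forall>k. \<sigma> k \<noteq> {#} \<Longrightarrow> sq_nil_word u \<Longrightarrow> sq_nil_word (subst_word \<sigma> u)"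
  unfolding sq_nil_word_def
  using le_size_subst_word two_le_count_subst_word by blast

lemma eq_theory_sq_nil_theory: "is_eq_theory sq_nil_theory"
  unfolding is_eq_theory_def sq_nil_theory_def
  by (intro conjI allI impI ballI;
      auto simp: subst_word_nonempty sq_nil_word_add sq_nil_word_subst add.commute[of _ c])

lemma repeat_mset_if_dvd_count:
  assumes "0 < m" "\<forall>i. m dvd count d i" shows "\<exists>a. d = repeat_mset m a"
proof -
  let ?f = "\<lambda>i. count d i div m"
  have "finite {i. 0 < ?f i}"
    by (rule finite_subset[of _ "set_mset d"])
      (auto simp: div_greater_zero_iff simp flip: count_greater_zero_iff)
  then have "count (repeat_mset m (Abs_multiset ?f)) i = count d i" for i
    using assms by simp
  then show ?thesis by (intro exI[of _ "Abs_multiset ?f"]) (simp add: multiset_eq_iff)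
qed

lemma count_mod_eq_iff_repeat_mset:
  assumes "0 < m"
  shows "(\<forall>i. count u i mod m = count v i mod m)
     \<longleftrightarrow> (\<exists>a b. u + repeat_mset m a = v + repeat_mset m b)"
proof
  assume h: "\<forall>i. count u i mod m = count v i mod m"
  have dvd_diff: "m dvd count (s - t) i" if "\<forall>i. count s i mod m = count t i mod m" for s t i
  proof (cases "count s i \<le> count t i")
    case False
    then show ?thesis using that mod_eq_dvd_iff_nat[of "count t i" "count s i" m] by simp
  qed simp
  obtain a where a: "v - u = repeat_mset m a"
    using repeat_mset_if_dvd_count[OF assms] dvd_diff h by (metis (no_types))
  obtain b where b: "u - v = repeat_mset m b"
    using repeat_mset_if_dvd_count[OF assms] dvd_diff h by (metis (no_types))
  have "u + (v - u) = v + (u - v)"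
    unfolding multiset_eq_iff count_union count_diff by (intro allI) linarith
  with a b show "\<exists>a b. u + repeat_mset m a = v + repeat_mset m b" by metis
next
  assume "\<exists>a b. u + repeat_mset m a = v + repeat_mset m b"
  then obtain a b where "u + repeat_mset m a = v + repeat_mset m b" by blast
  then have "count u i + m * count a i = count v i + m * count b i" for i
    by (metis count_repeat_mset count_union)
  then have "(count u i + m * count a i) mod m = (count v i + m * count b i) mod m" for i
    by presburger
  then show "\<forall>i. count u i mod m = count v i mod m" by simp
qed

lemma eq_theory_abelian_theory:
  assumes m: "0 < m" shows "is_eq_theory (abelian_theory m)"
  unfolding is_eq_theory_def
proof (intro conjI allI impI ballI)
  show "(a + c, b + c) \<in> abelian_theory m" if "(a, b) \<in> abelian_theory m" "c \<in> cwords" for a b c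
  proof -
    have "count a i mod m = count b i mod m" for i
      using that(1) unfolding abelian_theory_def by simp
    then have "(count a i + count c i) mod m = (count b i + count c i) mod m" for i
      by (rule mod_add_cong) simp
    with that show ?thesis unfolding abelian_theory_def by simp
  qed
  show "(subst_word \<sigma> a, subst_word \<sigma> b) \<in> abelian_theory m"
    if \<sigma>: "\<forall>i. \<sigma> i \<in> cwords" and ab: "(a, b) \<in> abelian_theory m" for \<sigma> a b
  proof -
    obtain wa wb where w: "a + repeat_mset m wa = b + repeat_mset m wb"
      using ab count_mod_eq_iff_repeat_mset[OF m, of a b] unfolding abelian_theory_def by blast
    have "subst_word \<sigma> a + repeat_mset m (subst_word \<sigma> wa)
             = subst_word \<sigma> b + repeat_mset m (subst_word \<sigma> wb)"
      using arg_cong[OF w, of "subst_word \<sigma>"] by simp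
    then have "\<forall>i. count (subst_word \<sigma> a) i mod m = count (subst_word \<sigma> b) i mod m"
      by (subst count_mod_eq_iff_repeat_mset[OF m]) blast
    with ab \<sigma> show ?thesis unfolding abelian_theory_def by (auto simp: subst_word_nonempty)
  qed
qed (auto simp: abelian_theory_def)

lemma abelian_theory_memI:
  "u \<noteq> {#} \<Longrightarrow> v \<noteq> {#} \<Longrightarrow> (\<And>k. count u k mod n = count v k mod n) \<Longrightarrow> (u, v) \<in> abelian_theory n"
  unfolding abelian_theory_def by auto

lemma abelian_theory_one: "abelian_theory 1 = full_theory"
  by (auto simp: abelian_theory_def full_theory_def)

lemma abelian_theory_antimono: "d dvd e \<Longrightarrow> abelian_theory e \<subseteq> abelian_theory d"
  unfolding abelian_theory_def by (auto, metis mod_mod_cancel)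

lemma group_identity_mem_abelian_theory_iff:
  "group_identity m \<in> abelian_theory q \<longleftrightarrow> q dvd m"
  unfolding group_identity_def abelian_theory_def by (auto simp: dvd_eq_mod_eq_0)

lemma abelian_theory_prime_inj:
  assumes "prime p" "prime q" "abelian_theory q = abelian_theory p" shows "q = p"
proof (rule primes_dvd_imp_eq[OF assms(2,1)])
  have "group_identity p \<in> abelian_theory p"
    by (simp add: group_identity_mem_abelian_theory_iff)
  then have "group_identity p \<in> abelian_theory q" using assms(3) by simp
  then show "q dvd p" by (simp only: group_identity_mem_abelian_theory_iff)
qed

lemma X_Y_notin_semilattice_theory: "(X, Y) \<notin> semilattice_theory"
  by (simp add: semilattice_theory_def)

lemma X_Y_notin_nil_theory: "(X, Y) \<notin> nil_theory 2"
  by (simp add: nil_theory_def)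

lemma X_Y_notin_abelian_theory:
  assumes "2 \<le> p" shows "(X, Y) \<notin> abelian_theory p"
proof
  assume "(X, Y) \<in> abelian_theory p"
  then have "count X 0 mod p = count Y 0 mod p" unfolding abelian_theory_def by blast
  with assms show False by simp
qed

lemma full_theory_neq:
  "semilattice_theory \<noteq> full_theory" "nil_theory 2 \<noteq> full_theory"
  "2 \<le> p \<Longrightarrow> abelian_theory p \<noteq> full_theory"
  using X_Y_notin_semilattice_theory X_Y_notin_nil_theory X_Y_notin_abelian_theory[of p]
  by (auto simp: full_theory_def)

lemma idempotent_absorb:
  assumes T: "is_eq_theory T" and idem: "({#0, 0#}, {#0#}) \<in> T"
    and "set_mset w \<subseteq> set_mset u" "u \<noteq> {#}"
  shows "(u + w, u) \<in> T"
  using assms(3)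
proof (induction w)
  case empty
  show ?case using eq_theory_refl[OF T \<open>u \<noteq> {#}\<close>] by simp
next
  case (add x w)
  have "x \<in># u" using add.prems by simp
  then obtain r where r: "u = add_mset x r" by (blast dest: multi_member_split)
  have "({#x, x#}, {#x#}) \<in> T"
    using eq_theory_subst[OF T _ idem, of "\<lambda>k. {#x#}"] by simp
  then have one: "(u + {#x#}, u) \<in> T"
    using eq_theory_add_right[OF T, of "{#x, x#}" "{#x#}" r] r by (simp add: add_mset_commute)
  have "(u + w, u) \<in> T" using add by simp
  then have "(u + w + {#x#}, u + {#x#}) \<in> T" by (rule eq_theory_add_right[OF T])
  then have "(u + add_mset x w, u + {#x#}) \<in> T" by simp
  then show ?case using eq_theory_trans[OF T _ one] by blast
qed

lemma SL_var_eq: "SL_var = semilattice_theory"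
  unfolding SL_var_def
proof (rule var_of_eqI[OF eq_theory_semilattice_theory])
  show "{({#0, 0#}, {#0#})} \<subseteq> semilattice_theory" by (simp add: semilattice_theory_def)
  fix T assume T: "is_eq_theory T" and "{({#0, 0#}, {#0#})} \<subseteq> T"
  then have idem: "({#0, 0#}, {#0#}) \<in> T" by simp
  show "semilattice_theory \<subseteq> T"
  proof
    fix p assume "p \<in> semilattice_theory"
    then obtain u v where p: "p = (u, v)" "u \<noteq> {#}" "v \<noteq> {#}" "set_mset u = set_mset v"
      unfolding semilattice_theory_def by auto
    have "(u + v, u) \<in> T" "(u + v, v) \<in> T"
      using idempotent_absorb[OF T idem, of v u] idempotent_absorb[OF T idem, of u v] p
      by (auto simp: add.commute)
    then show "p \<in> T" using p(1) eq_theory_from_common_left[OF T] by blast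
  qed
qed

lemma zero_absorb:
  assumes T: "is_eq_theory T" and zero: "({#0, 1, 2#}, {#0, 1#}) \<in> T"
    and "2 \<le> size u" "v \<noteq> {#}"
  shows "(u + v, u) \<in> T"
proof -
  have "u \<noteq> {#}" using assms(3) by auto
  then obtain i where "i \<in># u" by blast
  then obtain r where r: "u = add_mset i r" by (blast dest: multi_member_split)
  with assms(3) have "r \<noteq> {#}" by auto
  let ?\<sigma> = "\<lambda>k. if k = 0 then {#i#} else if k = 1 then r else v"
  have "(subst_word ?\<sigma> {#0, 1, 2#}, subst_word ?\<sigma> {#0, 1#}) \<in> T"
    by (rule eq_theory_subst[OF T _ zero]) (use \<open>r \<noteq> {#}\<close> assms(4) in auto)
  then show ?thesis using r by simp
qed

lemma ZM_var_eq: "ZM_var = nil_theory 2"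
  unfolding ZM_var_def
proof (rule var_of_eqI[OF eq_theory_nil_theory])
  show "{({#0, 1, 2#}, {#0, 1#})} \<subseteq> nil_theory 2" by (simp add: nil_theory_def)
  fix T assume T: "is_eq_theory T" and "{({#0, 1, 2#}, {#0, 1#})} \<subseteq> T"
  then have zero: "({#0, 1, 2#}, {#0, 1#}) \<in> T" by simp
  show "nil_theory 2 \<subseteq> T"
  proof
    fix p assume "p \<in> nil_theory 2"
    then obtain u v where p: "p = (u, v)" "u \<noteq> {#}" "v \<noteq> {#}"
      and "u = v \<or> (2 \<le> size u \<and> 2 \<le> size v)"
      unfolding nil_theory_def by auto
    then consider "u = v" | "2 \<le> size u" "2 \<le> size v" by blast
    then show "p \<in> T"
    proof cases
      case 1
      then show ?thesis using p eq_theory_refl[OF T] by simp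
    next
      case 2
      have "(u + v, u) \<in> T" "(u + v, v) \<in> T"
        using zero_absorb[OF T zero, of u v] zero_absorb[OF T zero, of v u] p 2
        by (auto simp: add.commute)
      then show "p \<in> T" using p(1) eq_theory_from_common_left[OF T] by blast
    qed
  qed
qed

lemma group_identity_absorb:
  assumes T: "is_eq_theory T" and g: "group_identity m \<in> T" and "z \<noteq> {#}"
  shows "(z + repeat_mset m w, z) \<in> T"
proof (cases "w = {#}")
  case False
  let ?\<sigma> = "\<lambda>k. if k = 0 then w else z"
  have "(subst_word ?\<sigma> (x_pow m + Y), subst_word ?\<sigma> Y) \<in> T"
    by (rule eq_theory_subst[OF T _ g[unfolded group_identity_def]]) (use False assms(3) in auto)
  then show ?thesis by (simp add: add.commute)
qed (use eq_theory_refl[OF T assms(3)] in simp)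

lemma abelian_theory_le:
  assumes T: "is_eq_theory T" and m: "0 < m" and g: "group_identity m \<in> T"
  shows "abelian_theory m \<subseteq> T"
proof
  fix p assume "p \<in> abelian_theory m"
  then obtain u v where p: "p = (u, v)" "u \<noteq> {#}" "v \<noteq> {#}"
    and "\<forall>i. count u i mod m = count v i mod m"
    unfolding abelian_theory_def by auto
  then obtain a b where ab: "u + repeat_mset m a = v + repeat_mset m b"
    using count_mod_eq_iff_repeat_mset[OF m, of u v] by blast
  have "(u + repeat_mset m a, u) \<in> T" by (rule group_identity_absorb[OF T g p(2)])
  moreover have "(u + repeat_mset m a, v) \<in> T"
    unfolding ab by (rule group_identity_absorb[OF T g p(3)])
  ultimately show "p \<in> T" unfolding p(1) by (rule eq_theory_from_common_left[OF T])
qed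

lemma A_var_eq: assumes "0 < m" shows "A_var m = abelian_theory m"
  unfolding A_var_def
proof (rule var_of_eqI[OF eq_theory_abelian_theory[OF assms]])
  show "{(x_pow m + Y, Y)} \<subseteq> abelian_theory m"
    using group_identity_mem_abelian_theory_iff[of m m] unfolding group_identity_def by simp
  show "abelian_theory m \<subseteq> T" if "is_eq_theory T" "{(x_pow m + Y, Y)} \<subseteq> T" for T
    using abelian_theory_le[OF that(1) assms] that(2) unfolding group_identity_def by simp
qed

subsection \<open>Classification of the atoms\<close>

lemma x_absorbing_identity_if_letter_dropped:
  assumes T: "is_eq_theory T" and uv: "(u,v) \<in> T" and i: "i \<in># u" "i \<notin># v"
  shows "\<exists>a b c. 1 \<le> a \<and> 1 \<le> c \<and> (x_pow a + y_pow b, y_pow c) \<in> T"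
proof -
  have ne: "u \<noteq> {#}" "v \<noteq> {#}" using eq_theory_nonempty[OF T uv] by auto
  let ?\<sigma> = "\<lambda>k. if k = i then X else Y"
  have 1: "(subst_word ?\<sigma> u, subst_word ?\<sigma> v) \<in> T" by (rule eq_theory_subst[OF T _ uv]) auto
  have 2: "subst_word ?\<sigma> u = x_pow (count u i) + y_pow (size u - count u i)"
    by (simp add: subst_word_two_letters)
  have 3: "subst_word ?\<sigma> v = y_pow (size v)"
    using i(2) by (simp add: subst_word_two_letters not_in_iff)
  have 4: "1 \<le> count u i" using i(1) by (simp add: Suc_le_eq)
  have 5: "1 \<le> size v" using ne(2) by (simp add: Suc_le_eq nonempty_has_size)
  show ?thesis using 1 2 3 4 5 by metis
qed

lemma x_absorbing_identity_if_not_le_semilattice: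
  assumes T: "is_eq_theory T" and "\<not> T \<subseteq> semilattice_theory"
  shows "\<exists>a b c. 1 \<le> a \<and> 1 \<le> c \<and> (x_pow a + y_pow b, y_pow c) \<in> T"
proof -
  obtain u v where uv: "(u,v) \<in> T" "(u,v) \<notin> semilattice_theory" using assms(2) by auto
  have ne: "u \<noteq> {#}" "v \<noteq> {#}" using eq_theory_nonempty[OF T uv(1)] by auto
  then have "set_mset u \<noteq> set_mset v" using uv(2) unfolding semilattice_theory_def by auto
  then obtain i where "(i \<in># u \<and> i \<notin># v) \<or> (i \<in># v \<and> i \<notin># u)" by blast
  then show ?thesis
    using x_absorbing_identity_if_letter_dropped[OF T uv(1)]
      x_absorbing_identity_if_letter_dropped[OF T eq_theory_sym[OF T uv(1)]]
    by blast
qed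

lemma power_identity_if_not_le_nil_theory:
  assumes T: "is_eq_theory T" and "\<not> T \<subseteq> nil_theory 2"
  shows "T = full_theory \<or> (\<exists>k\<ge>2. (X, x_pow k) \<in> T)"
proof -
  obtain u v where uv: "(u,v) \<in> T" "(u,v) \<notin> nil_theory 2" using assms(2) by auto
  have ne: "u \<noteq> {#}" "v \<noteq> {#}" using eq_theory_nonempty[OF T uv(1)] by auto
  have h: "u \<noteq> v" "size u < 2 \<or> size v < 2" using uv(2) ne unfolding nil_theory_def by auto
  have key: "T = full_theory \<or> (\<exists>k\<ge>2. (X, x_pow k) \<in> T)"
    if ab: "(a, b) \<in> T" "a \<noteq> b" "size a < 2" for a b
  proof -
    have ne2: "a \<noteq> {#}" "b \<noteq> {#}" using eq_theory_nonempty[OF T ab(1)] by auto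
    then have "0 < size a" "0 < size b" by (simp_all add: nonempty_has_size)
    then have "size a = 1" using ab(3) by linarith
    then obtain i where a: "a = {#i#}" using size_1_singleton_mset by blast
    show ?thesis
    proof (cases "size b = 1")
      case True
      then obtain j where b: "b = {#j#}" using size_1_singleton_mset by blast
      then have ij: "i \<noteq> j" using a ab(2) by auto
      let ?\<sigma> = "\<lambda>k. if k = i then X else Y"
      have "(subst_word ?\<sigma> a, subst_word ?\<sigma> b) \<in> T"
        by (rule eq_theory_subst[OF T _ ab(1)]) auto
      then have "(X,Y) \<in> T" using a b ij by simp
      then show ?thesis using full_theory_if_X_Y[OF T] by blast
    next
      case False
      then have b2: "2 \<le> size b" using \<open>0 < size b\<close> by linarith
      have "(subst_word (\<lambda>k. X) a, subst_word (\<lambda>k. X) b) \<in> T"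
        by (rule eq_theory_subst[OF T _ ab(1)]) auto
      then have "(X, x_pow (size b)) \<in> T" using a by (simp add: subst_word_const)
      then show ?thesis using b2 by blast
    qed
  qed
  show ?thesis
  proof (cases "size u < 2")
    case True then show ?thesis using key[OF uv(1) h(1)] by blast
  next
    case False then have "size v < 2" using h by auto
    then show ?thesis using key[OF eq_theory_sym[OF T uv(1)]] h(1) by auto
  qed
qed

lemma power_period:
  assumes T: "is_eq_theory T" and g: "(X, x_pow (n+1)) \<in> T" and w: "w \<noteq> {#}" and E: "1 \<le> E"
  shows "(repeat_mset E w, repeat_mset (E + n*M) w) \<in> T"
proof (induction M)
  case 0 show ?case using eq_theory_refl[OF T] w E by (simp add: repeat_mset_eq_empty_iff)
next
  case (Suc M)
  let ?r = "repeat_mset (E + n * M - 1) w"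
  have "(w, repeat_mset (n + 1) w) \<in> T"
    using eq_theory_subst[OF T _ g, of "\<lambda>k. w"] w by simp
  then have step: "(w + ?r, repeat_mset (n + 1) w + ?r) \<in> T"
    by (rule eq_theory_add_right[OF T])
  have E_Suc: "E + n * M = Suc (E + n * M - 1)" using E by simp
  have lhs: "w + ?r = repeat_mset (E + n * M) w"
    by (subst E_Suc) simp
  have "(n + 1) + (E + n * M - 1) = E + n * Suc M" using E by simp
  then have rhs: "repeat_mset (n + 1) w + ?r = repeat_mset (E + n * Suc M) w"
    by (metis repeat_mset_distrib)
  show ?case using Suc.IH step eq_theory_trans[OF T] unfolding lhs rhs by blast
qed

lemma group_identity_if_power_identity:
  assumes T: "is_eq_theory T" and g: "(X, x_pow (n+1)) \<in> T" and n: "1 \<le> n"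
    and h: "(x_pow a + y_pow b, y_pow c) \<in> T" and a: "1 \<le> a" and c: "1 \<le> c"
  shows "group_identity n \<in> T"
proof -
  txt \<open>Since x^n = x^(kn), substituting x^n and y^n into x^a y^b = y^c yields x^n y^n = y^n
    (or x^n = y^n if b = 0); multiplying by y and using y = y^(n+1) gives x^n y = y.\<close>
  have P: "(replicate_mset n j, replicate_mset (k*n) j) \<in> T" if "1 \<le> k" for j k
  proof -
    have "(repeat_mset n {#j#}, repeat_mset (n + n*(k-1)) {#j#}) \<in> T"
      using power_period[OF T g, of "{#j#}" n "k-1"] n by simp
    moreover have "n + n*(k-1) = k*n" using that by (cases k) auto
    ultimately show ?thesis by simp
  qed
  let ?\<sigma> = "\<lambda>k. if k = 0 then x_pow n else y_pow n"
  have "(subst_word ?\<sigma> (x_pow a + y_pow b), subst_word ?\<sigma> (y_pow c)) \<in> T"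
    by (rule eq_theory_subst[OF T _ h]) (use n in auto)
  then have h2: "(x_pow (a*n) + y_pow (b*n), y_pow (c*n)) \<in> T" by simp
  have Y1': "(repeat_mset 1 Y, repeat_mset (1 + n*1) Y) \<in> T"
    using power_period[OF T g, of Y 1 1] by simp
  have Y1: "(Y, y_pow (n+1)) \<in> T" using Y1' by (simp add: add.commute)
  have xa: "(x_pow (a*n), x_pow n) \<in> T" using P[OF a] eq_theory_sym[OF T] by blast
  have yc: "(y_pow (c*n), y_pow n) \<in> T" using P[OF c] eq_theory_sym[OF T] by blast
  have ynY: "y_pow n + Y = y_pow (n+1)" by simp
  show ?thesis
  proof (cases "b = 0")
    case True
    then have "(x_pow (a*n), y_pow (c*n)) \<in> T" using h2 by simp
    then have xy: "(x_pow n, y_pow n) \<in> T" using xa yc by (meson T eq_theory_sym eq_theory_trans)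
    have "(x_pow n + Y, y_pow n + Y) \<in> T" using eq_theory_add_right[OF T xy] .
    then have "(x_pow n + Y, y_pow (n+1)) \<in> T" by (simp only: ynY)
    then show ?thesis
      using Y1 unfolding group_identity_def by (meson T eq_theory_sym eq_theory_trans)
  next
    case False
    then have "1 \<le> b" by simp
    have yb: "(y_pow (b*n), y_pow n) \<in> T" using P[OF \<open>1 \<le> b\<close>] eq_theory_sym[OF T] by blast
    have "(x_pow (a*n) + y_pow (b*n), x_pow n + y_pow n) \<in> T" using eq_theory_add[OF T xa yb] .
    then have "(x_pow n + y_pow n, y_pow n) \<in> T"
      using h2 yc by (meson T eq_theory_sym eq_theory_trans)
    then have "(x_pow n + y_pow n + Y, y_pow n + Y) \<in> T" using eq_theory_add_right[OF T] by blast
    then have 1: "(x_pow n + y_pow (n+1), y_pow (n+1)) \<in> T" by (simp only: add.assoc ynY)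
    have 2: "(x_pow n + Y, x_pow n + y_pow (n+1)) \<in> T" using eq_theory_add_left[OF T Y1] .
    show ?thesis
      using 1 2 Y1 unfolding group_identity_def by (meson T eq_theory_sym eq_theory_trans)
  qed
qed

lemma one_letter_reduction:
  assumes T: "is_eq_theory T" and n: "0 < n" and A: "abelian_theory n \<subseteq> T" and uv: "(u,v) \<in> T"
  shows "(x_pow (count u i + (n-1) * count v i) + Y, Y) \<in> T"
proof -
  txt \<open>Substitute x for x_i and y^n for the other letters; modulo A_n the powers of y^n can be
    traded for y, and x^(n count v i) for nothing.\<close>
  have Suc_mult_mod [simp]: "Suc (s * n) mod n = Suc 0 mod n" for s
    by (subst mod_Suc_eq[symmetric]) simp
  define a where "a = count u i"
  define c where "c = count v i"
  define s where "s = size u - a"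
  define t where "t = size v - c"
  let ?\<sigma> = "\<lambda>k. if k = i then X else y_pow n"
  have "(subst_word ?\<sigma> u, subst_word ?\<sigma> v) \<in> T" by (rule eq_theory_subst[OF T _ uv]) (use n in auto)
  then have h: "(x_pow a + y_pow (s*n), x_pow c + y_pow (t*n)) \<in> T"
    unfolding a_def c_def s_def t_def by (simp add: subst_word_two_letters)
  then have h2: "(x_pow a + y_pow (s*n) + (x_pow ((n-1)*c) + Y),
                  x_pow c + y_pow (t*n) + (x_pow ((n-1)*c) + Y)) \<in> T"
    using eq_theory_add_right[OF T] by blast
  have l: "(x_pow (a + (n-1)*c) + Y, x_pow a + y_pow (s*n) + (x_pow ((n-1)*c) + Y)) \<in> T"
  proof (rule subsetD[OF A], rule abelian_theory_memI)
    fix k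
    show "count (x_pow (a + (n - 1) * c) + Y) k mod n
        = count (x_pow a + y_pow (s * n) + (x_pow ((n - 1) * c) + Y)) k mod n"
      by (cases "k = 0"; cases "k = 1"; simp)
  qed auto
  have cc: "c + (n-1)*c = n*c" using n by (cases n) auto
  have r: "(x_pow c + y_pow (t*n) + (x_pow ((n-1)*c) + Y), Y) \<in> T"
  proof (rule subsetD[OF A], rule abelian_theory_memI)
    fix k
    show "count (x_pow c + y_pow (t*n) + (x_pow ((n-1)*c) + Y)) k mod n = count Y k mod n"
      using cc by (cases "k = 0"; cases "k = 1"; simp)
  qed auto
  show ?thesis using l h2 r unfolding a_def[symmetric] c_def[symmetric] by (meson T eq_theory_trans)
qed

definition absorbing_exponents :: "identities \<Rightarrow> nat multiset \<Rightarrow> nat set" where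
  "absorbing_exponents T w = {e. 1 \<le> e \<and> (x_pow e + w, w) \<in> T}"

lemma absorbing_exponents_diff:
  assumes T: "is_eq_theory T"
    and e: "e1 \<in> absorbing_exponents T w" "e2 \<in> absorbing_exponents T w" "e2 < e1"
  shows "e1 - e2 \<in> absorbing_exponents T w"
proof -
  let ?f = "e1 - e2"
  have h1: "(x_pow e1 + w, w) \<in> T" and h2: "(x_pow e2 + w, w) \<in> T"
    using e unfolding absorbing_exponents_def by auto
  have "(x_pow ?f + (x_pow e2 + w), x_pow ?f + w) \<in> T" using eq_theory_add_left[OF T h2] .
  moreover have "x_pow ?f + (x_pow e2 + w) = x_pow e1 + w"
    using e(3) by (metis add.assoc le_add_diff_inverse2 less_imp_le replicate_mset_add)
  ultimately have "(x_pow ?f + w, x_pow e1 + w) \<in> T" using eq_theory_sym[OF T] by metis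
  then have "(x_pow ?f + w, w) \<in> T" using h1 eq_theory_trans[OF T] by blast
  then show ?thesis unfolding absorbing_exponents_def using e(3) by auto
qed

lemma Least_dvd_if_closed_under_diff:
  fixes S :: "nat set"
  assumes "0 \<notin> S" and closed: "\<And>a b. a \<in> S \<Longrightarrow> b \<in> S \<Longrightarrow> b < a \<Longrightarrow> a - b \<in> S"
    and "a \<in> S"
  shows "(LEAST e. e \<in> S) dvd a"
  using \<open>a \<in> S\<close>
proof (induction a rule: less_induct)
  case (less a)
  define d where "d = (LEAST e. e \<in> S)"
  have "d \<in> S" "d \<le> a" using less.prems unfolding d_def by (auto intro: LeastI Least_le)
  then have "0 < d" using assms(1) by (cases d) auto
  show ?case
  proof (cases "d = a")
    case False
    with \<open>d \<le> a\<close> have "a - d \<in> S" using closed less.prems \<open>d \<in> S\<close> by simp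
    then have "d dvd a - d" using less.IH[of "a - d"] \<open>0 < d\<close> \<open>d \<le> a\<close> unfolding d_def by simp
    then show ?thesis
      using \<open>d \<le> a\<close> unfolding d_def[symmetric] by (metis le_add_diff_inverse2 dvd_refl dvd_add)
  qed (simp add: d_def)
qed

lemma abelian_theory_eq_if_le:
  assumes T: "is_eq_theory T" and n: "0 < n" and A: "abelian_theory n \<subseteq> T"
  shows "\<exists>d. 0 < d \<and> d dvd n \<and> T = abelian_theory d"
proof -
  let ?S = "absorbing_exponents T Y"
  define d where "d = (LEAST e. e \<in> ?S)"
  have dvd: "d dvd e" if "e \<in> ?S" for e
    unfolding d_def
    by (rule Least_dvd_if_closed_under_diff[OF _ absorbing_exponents_diff[OF T] that])
       (simp add: absorbing_exponents_def)
  have "group_identity n \<in> T"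
    by (rule subsetD[OF A]) (simp add: group_identity_mem_abelian_theory_iff)
  then have "n \<in> ?S" using n unfolding absorbing_exponents_def group_identity_def by simp
  then have "d \<in> ?S" unfolding d_def by (rule LeastI)
  then have d: "0 < d" "group_identity d \<in> T"
    unfolding absorbing_exponents_def group_identity_def by auto
  have "T \<subseteq> abelian_theory d"
  proof
    fix p assume p: "p \<in> T"
    then obtain u v where puv: "p = (u, v)" "u \<noteq> {#}" "v \<noteq> {#}"
      using eq_theory_nonempty[OF T] by (cases p) blast
    have "count u i mod d = count v i mod d" for i
    proof -
      define e where "e = count u i + (n - 1) * count v i"
      have "(x_pow e + Y, Y) \<in> T" using one_letter_reduction[OF T n A] p puv unfolding e_def by simp
      then have "d dvd e" using dvd unfolding absorbing_exponents_def by (cases e) auto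
      then obtain q1 where q1: "e = d * q1" ..
      obtain q2 where q2: "n = d * q2" using dvd \<open>n \<in> ?S\<close> by blast
      have "e + count v i = count u i + n * count v i"
        unfolding e_def using n by (cases n) (auto simp: algebra_simps)
      then have "count u i + d * (q2 * count v i) = count v i + d * q1"
        using q1 q2 by (simp add: algebra_simps)
      then have "(count u i + d * (q2 * count v i)) mod d = (count v i + d * q1) mod d" by simp
      then show ?thesis by simp
    qed
    then show "p \<in> abelian_theory d" using puv unfolding abelian_theory_def by auto
  qed
  with d abelian_theory_le[OF T] \<open>n \<in> ?S\<close> dvd show ?thesis by blast
qed

lemma abelian_theory_le_if_not_le_semilattice_nil:
  assumes T: "is_eq_theory T" and "T \<noteq> full_theory"
    and "\<not> T \<subseteq> semilattice_theory" "\<not> T \<subseteq> nil_theory 2"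
  shows "\<exists>n>0. abelian_theory n \<subseteq> T"
proof -
  obtain k where k: "k \<ge> 2" "(X, x_pow k) \<in> T"
    using power_identity_if_not_le_nil_theory[OF T assms(4)] assms(2) by blast
  obtain a b c where abc: "1 \<le> a" "1 \<le> c" "(x_pow a + y_pow b, y_pow c) \<in> T"
    using x_absorbing_identity_if_not_le_semilattice[OF T assms(3)] by blast
  have g: "(X, x_pow ((k-1)+1)) \<in> T" using k by simp
  have gA: "group_identity (k-1) \<in> T"
    using group_identity_if_power_identity[OF T g _ abc(3) abc(1) abc(2)] k by simp
  have k1: "0 < k-1" using k by simp
  show ?thesis using abelian_theory_le[OF T k1 gA] k1 by blast
qed

lemma le_some_atom_theory:
  assumes T: "is_eq_theory T" and "T \<noteq> full_theory"
  shows "T \<subseteq> semilattice_theory \<or> T \<subseteq> nil_theory 2 \<or> (\<exists>p. prime p \<and> T \<subseteq> abelian_theory p)"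
proof (cases "T \<subseteq> semilattice_theory \<or> T \<subseteq> nil_theory 2")
  case True then show ?thesis by blast
next
  case False
  then obtain n where n: "0 < n" "abelian_theory n \<subseteq> T"
    using abelian_theory_le_if_not_le_semilattice_nil[OF T assms(2)] by blast
  then obtain d where d: "0 < d" "T = abelian_theory d" using abelian_theory_eq_if_le[OF T] by blast
  then have "d \<noteq> 1" using assms(2) abelian_theory_one by auto
  then obtain p where "prime p" "p dvd d" using prime_factor_nat by blast
  then show ?thesis using abelian_theory_antimono d by blast
qed

lemma semilattice_theory_maximal:
  assumes T: "is_eq_theory T" and "semilattice_theory \<subseteq> T" "T \<noteq> semilattice_theory"
  shows "T = full_theory"
proof -
  have "\<not> T \<subseteq> semilattice_theory" using assms by blast
  then obtain a b c where abc: "1 \<le> a" "1 \<le> c" "(x_pow a + y_pow b, y_pow c) \<in> T"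
    using x_absorbing_identity_if_not_le_semilattice[OF T] by blast
  have yc: "(y_pow c, Y) \<in> T"
    using abc(2) by (intro subsetD[OF assms(2)]) (simp add: semilattice_theory_def)
  show ?thesis
  proof (cases "b = 0")
    case True
    have xa: "(X, x_pow a) \<in> T"
      using abc(1) by (intro subsetD[OF assms(2)]) (simp add: semilattice_theory_def)
    have "(x_pow a, y_pow c) \<in> T" using abc(3) True by simp
    then have "(X, Y) \<in> T" using xa yc by (meson T eq_theory_trans)
    then show ?thesis using full_theory_if_X_Y[OF T] by blast
  next
    case False
    have "(X + Y, x_pow a + y_pow b) \<in> T"
      using abc(1) False by (intro subsetD[OF assms(2)]) (auto simp: semilattice_theory_def)
    then have "(X + Y, Y) \<in> T" using abc(3) yc by (meson T eq_theory_trans)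
    then show ?thesis using full_theory_if_XY_Y[OF T] by blast
  qed
qed

lemma nil_theory_maximal:
  assumes T: "is_eq_theory T" and "nil_theory 2 \<subseteq> T" "T \<noteq> nil_theory 2"
  shows "T = full_theory"
proof -
  have "\<not> T \<subseteq> nil_theory 2" using assms by blast
  then have "T = full_theory \<or> (\<exists>k\<ge>2. (X, x_pow k) \<in> T)"
    using power_identity_if_not_le_nil_theory[OF T] by blast
  then show ?thesis
  proof
    assume "\<exists>k\<ge>2. (X, x_pow k) \<in> T"
    then obtain k where k: "k \<ge> 2" "(X, x_pow k) \<in> T" by blast
    have "(x_pow k, X + Y) \<in> T"
      using k(1) by (intro subsetD[OF assms(2)]) (simp add: nil_theory_def)
    then have X_XY: "(X, X + Y) \<in> T" using k(2) by (meson T eq_theory_trans)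
    let ?\<sigma> = "\<lambda>k. if k = 0 then Y else X"
    have "(subst_word ?\<sigma> X, subst_word ?\<sigma> (X + Y)) \<in> T"
      by (rule eq_theory_subst[OF T _ X_XY]) auto
    then have "(Y, X + Y) \<in> T" by (simp add: add.commute)
    then show ?thesis using full_theory_if_XY_Y[OF T] eq_theory_sym[OF T] by blast
  qed
qed

lemma abelian_theory_maximal:
  assumes T: "is_eq_theory T" and p: "prime p" and "abelian_theory p \<subseteq> T" "T \<noteq> abelian_theory p"
  shows "T = full_theory"
proof -
  have p0: "0 < p" using p prime_gt_0_nat by blast
  obtain d where d: "0 < d" "d dvd p" "T = abelian_theory d"
    using abelian_theory_eq_if_le[OF T p0 assms(3)] by blast
  then have "d = 1 \<or> d = p" using p by (simp add: prime_nat_iff)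
  then show ?thesis using d assms(4) abelian_theory_one by auto
qed

lemma Com_iff [simp]: "T \<in> Com \<longleftrightarrow> is_eq_theory T"
  by (simp add: Com_def)

definition Com_atom :: "identities \<Rightarrow> bool" where
  "Com_atom x \<longleftrightarrow> x \<in> Com \<and> x \<noteq> full_theory \<and> (\<forall>z\<in>Com. x \<subseteq> z \<longrightarrow> z = full_theory \<or> z = x)"

lemma Com_atom_in_Com: "Com_atom b \<Longrightarrow> b \<in> Com"
  unfolding Com_atom_def by blast

lemma Com_atomI:
  "is_eq_theory x \<Longrightarrow> x \<noteq> full_theory
    \<Longrightarrow> (\<And>z. is_eq_theory z \<Longrightarrow> x \<subseteq> z \<Longrightarrow> z \<noteq> x \<Longrightarrow> z = full_theory) \<Longrightarrow> Com_atom x"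
  unfolding Com_atom_def Com_def by blast

lemma Com_atom_semilattice_theory: "Com_atom semilattice_theory"
  using eq_theory_semilattice_theory full_theory_neq(1) semilattice_theory_maximal
  by (rule Com_atomI)

lemma Com_atom_nil_theory: "Com_atom (nil_theory 2)"
  using eq_theory_nil_theory full_theory_neq(2) nil_theory_maximal by (rule Com_atomI)

lemma Com_atom_abelian_theory: "prime p \<Longrightarrow> Com_atom (abelian_theory p)"
  using eq_theory_abelian_theory[OF prime_gt_0_nat] full_theory_neq(3)[OF prime_ge_2_nat]
    abelian_theory_maximal
  by (rule Com_atomI)

lemma Com_atom_iff:
  "Com_atom x \<longleftrightarrow> x = semilattice_theory \<or> x = nil_theory 2 \<or> (\<exists>p. prime p \<and> x = abelian_theory p)"
proof
  assume "Com_atom x"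
  then have x: "is_eq_theory x" "x \<noteq> full_theory"
    and max: "\<And>z. is_eq_theory z \<Longrightarrow> x \<subseteq> z \<Longrightarrow> z = full_theory \<or> z = x"
    unfolding Com_atom_def Com_def by blast+
  from le_some_atom_theory[OF x]
  show "x = semilattice_theory \<or> x = nil_theory 2 \<or> (\<exists>p. prime p \<and> x = abelian_theory p)"
  proof (elim disjE exE conjE)
    assume "x \<subseteq> semilattice_theory"
    then have "semilattice_theory = full_theory \<or> semilattice_theory = x"
      by (rule max[OF eq_theory_semilattice_theory])
    with full_theory_neq(1) show ?thesis by (elim disjE) simp_all
  next
    assume "x \<subseteq> nil_theory 2"
    then have "nil_theory 2 = full_theory \<or> nil_theory 2 = x"
      by (rule max[OF eq_theory_nil_theory])
    with full_theory_neq(2) show ?thesis by (elim disjE) simp_all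
  next
    fix p assume p: "prime p" "x \<subseteq> abelian_theory p"
    then have "abelian_theory p = full_theory \<or> abelian_theory p = x"
      using max[OF eq_theory_abelian_theory[OF prime_gt_0_nat]] by blast
    with p(1) full_theory_neq(3)[OF prime_ge_2_nat[OF p(1)]] show ?thesis by (elim disjE) auto
  qed
qed (use Com_atom_semilattice_theory Com_atom_nil_theory Com_atom_abelian_theory in blast)

text \<open>In variety terms: y is a proper supervariety of the atom x containing no other atom.\<close>
definition isolates :: "identities \<Rightarrow> identities \<Rightarrow> bool" where
  "isolates y x \<longleftrightarrow> y \<subseteq> x \<and> y \<noteq> x \<and> (\<forall>b. Com_atom b \<and> y \<subseteq> b \<longrightarrow> b = x)"

definition isolable :: "identities \<Rightarrow> bool" where
  "isolable x \<longleftrightarrow> (\<exists>y\<in>Com. isolates y x)"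

definition branching_isolable :: "identities \<Rightarrow> bool" where
  "branching_isolable x \<longleftrightarrow>
     (\<exists>y\<in>Com. isolates y x \<and> (\<exists>z1\<in>Com. \<exists>z2\<in>Com. y \<subseteq> z1 \<and> y \<subseteq> z2 \<and> \<not> z1 \<subseteq> z2 \<and> \<not> z2 \<subseteq> z1))"

lemma isolable_if_branching_isolable: "branching_isolable x \<Longrightarrow> isolable x"
  unfolding branching_isolable_def isolable_def by blast

subsection \<open>The semilattice atom is not isolable\<close>

lemma diff_mem_absorbing_exponents:
  assumes T: "is_eq_theory T" and g: "(X, x_pow (n + 1)) \<in> T" and n: "1 \<le> n"
    and h: "(x_pow E1, x_pow E2) \<in> T" and E: "1 \<le> E1" "E1 < E2"
  shows "E2 - E1 \<in> absorbing_exponents T X"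
proof -
  txt \<open>With d = E2 - E1 and R = x^(1 + n E1 - E1):
    x^(1+d) = x^(1+d+n E1) = x^E2 R = x^E1 R = x^(1+n E1) = x.\<close>
  define d where "d = E2 - E1"
  define R where "R = x_pow (1 + n * E1 - E1)"
  have "E1 \<le> n * E1" using n by simp
  have 1: "(x_pow (1 + d), x_pow (1 + d + n * E1)) \<in> T"
    using power_period[OF T g, of X "1 + d" E1] by simp
  have "1 + d + n * E1 = E2 + (1 + n * E1 - E1)" using \<open>E1 \<le> n * E1\<close> E unfolding d_def by arith
  then have 2: "x_pow (1 + d + n * E1) = x_pow E2 + R"
    unfolding R_def by (simp only: replicate_mset_add)
  have 3: "(x_pow E2 + R, x_pow E1 + R) \<in> T"
    using eq_theory_add_right[OF T eq_theory_sym[OF T h]] .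
  have "E1 + (1 + n * E1 - E1) = 1 + n * E1" using \<open>E1 \<le> n * E1\<close> by arith
  then have 4: "x_pow E1 + R = x_pow (1 + n * E1)"
    unfolding R_def by (metis replicate_mset_add)
  have 5: "(x_pow (1 + n * E1), X) \<in> T"
    using eq_theory_sym[OF T power_period[OF T g, of X 1 E1]] by simp
  have "(x_pow (1 + d), X) \<in> T"
    using 1 3 5 eq_theory_trans[OF T] unfolding 2 4 by blast
  moreover have "x_pow (1 + d) = x_pow d + X" by simp
  ultimately show ?thesis using E unfolding absorbing_exponents_def d_def by auto
qed

lemma le_abelian_theory_if_dvd_absorbing_exponents:
  assumes T: "is_eq_theory T" and g: "(X, x_pow (n + 1)) \<in> T" and n: "1 \<le> n"
    and "p dvd n" and dvd: "\<forall>e\<in>absorbing_exponents T X. p dvd e"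
  shows "T \<subseteq> abelian_theory p"
proof
  fix q assume "q \<in> T"
  then obtain u v where q: "q = (u, v)" and uv: "(u, v) \<in> T" by (cases q) blast
  have ne: "u \<noteq> {#}" "v \<noteq> {#}" using eq_theory_nonempty[OF T uv] by auto
  obtain k where k: "n = p * k" using \<open>p dvd n\<close> ..
  have "count u i mod p = count v i mod p" for i
  proof -
    txt \<open>Substituting x for x_i and x^n for all other letters leaves the count of x_i
      unchanged modulo p.\<close>
    define E where "E w = count w i + (size w - count w i) * n" for w
    let ?\<sigma> = "\<lambda>k. if k = i then X else x_pow n"
    have "(subst_word ?\<sigma> u, subst_word ?\<sigma> v) \<in> T"
      by (rule eq_theory_subst[OF T _ uv]) (use n in auto)
    then have E_uv: "(x_pow (E u), x_pow (E v)) \<in> T"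
      unfolding E_def by (simp add: subst_word_two_letters replicate_mset_add)
    have E_mod: "E w mod p = count w i mod p" for w
      unfolding E_def k by (metis mod_mult_self2 mult.commute mult.left_commute)
    have E_pos: "1 \<le> E w" if "w \<noteq> {#}" for w
      using that n unfolding E_def
      by (cases "count w i") (auto simp: Suc_le_eq nonempty_has_size)
    have "E w1 mod p = E w2 mod p"
      if "(x_pow (E w1), x_pow (E w2)) \<in> T" "w1 \<noteq> {#}" "E w1 < E w2" for w1 w2
    proof -
      have "E w2 - E w1 \<in> absorbing_exponents T X"
        using diff_mem_absorbing_exponents[OF T g n that(1) E_pos[OF that(2)] that(3)] .
      with dvd have "p dvd E w2 - E w1" by blast
      with that(3) show ?thesis using mod_eq_dvd_iff_nat[of "E w1" "E w2" p] by simp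
    qed
    then have "E u mod p = E v mod p"
      using E_uv eq_theory_sym[OF T E_uv] ne by (metis linorder_neqE_nat)
    then show ?thesis using E_mod by simp
  qed
  then show "q \<in> abelian_theory p" using q ne unfolding abelian_theory_def by simp
qed

lemma semilattice_theory_le_if_not_le_other_atoms:
  assumes T: "is_eq_theory T" and "T \<noteq> full_theory" "\<not> T \<subseteq> nil_theory 2"
    and not_abelian: "\<forall>p. prime p \<longrightarrow> \<not> T \<subseteq> abelian_theory p"
  shows "semilattice_theory \<subseteq> T"
proof -
  obtain k where k: "2 \<le> k" "(X, x_pow k) \<in> T"
    using power_identity_if_not_le_nil_theory[OF T assms(3)] assms(2) by blast
  define n where "n = k - 1"
  have n: "1 \<le> n" and g: "(X, x_pow (n + 1)) \<in> T" using k unfolding n_def by simp_all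
  let ?D = "absorbing_exponents T X"
  define d where "d = (LEAST e. e \<in> ?D)"
  have dvd: "d dvd e" if "e \<in> ?D" for e
    unfolding d_def
    by (rule Least_dvd_if_closed_under_diff[OF _ absorbing_exponents_diff[OF T] that])
       (simp add: absorbing_exponents_def)
  have "n \<in> ?D" using n eq_theory_sym[OF T g] unfolding absorbing_exponents_def by simp
  then have "d \<in> ?D" unfolding d_def by (rule LeastI)
  have "d = 1"
  proof (rule ccontr)
    assume "d \<noteq> 1"
    then obtain p where p: "prime p" "p dvd d" using prime_factor_nat by blast
    then have "T \<subseteq> abelian_theory p"
      using le_abelian_theory_if_dvd_absorbing_exponents[OF T g n] dvd \<open>n \<in> ?D\<close> dvd_trans
      by blast
    with p not_abelian show False by blast
  qed
  with \<open>d \<in> ?D\<close> have "({#0, 0#}, {#0#}) \<in> T" unfolding absorbing_exponents_def by simp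
  then show ?thesis
    using var_of_least[OF T, of "{({#0, 0#}, {#0#})}"] SL_var_eq unfolding SL_var_def by simp
qed

lemma not_isolable_semilattice_theory: "\<not> isolable semilattice_theory"
proof
  assume "isolable semilattice_theory"
  then obtain y where "y \<in> Com" "isolates y semilattice_theory" unfolding isolable_def ..
  then have y: "is_eq_theory y" "y \<subseteq> semilattice_theory" "y \<noteq> semilattice_theory"
    and only: "\<And>b. Com_atom b \<Longrightarrow> y \<subseteq> b \<Longrightarrow> b = semilattice_theory"
    unfolding isolates_def by simp_all
  have "Com_atom (nil_theory 2)" "\<And>p. prime p \<Longrightarrow> Com_atom (abelian_theory p)"
    by (auto simp: Com_atom_iff)
  moreover have "nil_theory 2 \<noteq> semilattice_theory"
  proof -
    have "(x_pow 2, X) \<in> semilattice_theory" "(x_pow 2, X) \<notin> nil_theory 2"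
      by (auto simp: semilattice_theory_def nil_theory_def multiset_eq_iff dest!: spec[of _ 0])
    then show ?thesis by blast
  qed
  moreover have "abelian_theory p \<noteq> semilattice_theory" if "prime p" for p
    using group_identity_mem_abelian_theory_iff[of p p] that prime_gt_0_nat[OF that]
    by (auto simp: group_identity_def semilattice_theory_def)
  ultimately have "\<not> y \<subseteq> nil_theory 2" "\<forall>p. prime p \<longrightarrow> \<not> y \<subseteq> abelian_theory p"
    using only by blast+
  moreover have "y \<noteq> full_theory"
    using y le_full_theory[OF eq_theory_semilattice_theory] full_theory_neq(1) by blast
  ultimately have "semilattice_theory \<subseteq> y"
    using semilattice_theory_le_if_not_le_other_atoms[OF y(1)] by blast
  with y show False by blast
qed

subsection \<open>The nil atom is isolated by a branching variety\<close>

lemma isolates_nil_theory_4: "isolates (nil_theory 4) (nil_theory 2)"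
  unfolding isolates_def
proof (intro conjI allI impI)
  show "nil_theory 4 \<subseteq> nil_theory 2" unfolding nil_theory_def by auto
  have "(x_pow 2, X + Y) \<in> nil_theory 2" "(x_pow 2, X + Y) \<notin> nil_theory 4"
    by (auto simp: nil_theory_def multiset_eq_iff dest!: spec[of _ 1])
  then show "nil_theory 4 \<noteq> nil_theory 2" by blast
  fix b assume b: "Com_atom b \<and> nil_theory 4 \<subseteq> b"
  have "(x_pow 4, y_pow 4) \<in> nil_theory 4" "(x_pow 4, y_pow 4) \<notin> semilattice_theory"
    by (auto simp: nil_theory_def semilattice_theory_def)
  moreover have "(x_pow 4, x_pow 5) \<in> nil_theory 4" by (simp add: nil_theory_def)
  moreover have "(x_pow 4, x_pow 5) \<notin> abelian_theory p" if "prime p" for p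
  proof
    assume "(x_pow 4, x_pow 5) \<in> abelian_theory p"
    then have "count (x_pow 4) 0 mod p = count (x_pow 5) 0 mod p"
      unfolding abelian_theory_def by blast
    then have "p dvd 5 - 4" using mod_eq_dvd_iff_nat[of 4 5 p] by simp
    with that show False by simp
  qed
  ultimately show "b = nil_theory 2" using b unfolding Com_atom_iff by blast
qed

lemma branching_isolable_nil_theory: "branching_isolable (nil_theory 2)"
proof -
  have "(x_pow 2, y_pow 2) \<in> sq_nil_theory" "(x_pow 2, y_pow 2) \<notin> nil_theory 3"
    by (auto simp: sq_nil_theory_def sq_nil_word_def nil_theory_def multiset_eq_iff dest!: spec[of _ 0])
  then have 1: "\<not> sq_nil_theory \<subseteq> nil_theory 3" by blast
  have "({#0, 1, 2#}, {#0, 1, 3#}) \<in> nil_theory 3" "({#0, 1, 2#}, {#0, 1, 3#}) \<notin> sq_nil_theory"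
    by (auto simp: sq_nil_theory_def sq_nil_word_def nil_theory_def)
  then have 2: "\<not> nil_theory 3 \<subseteq> sq_nil_theory" by blast
  have 3: "nil_theory 4 \<subseteq> sq_nil_theory" "nil_theory 4 \<subseteq> nil_theory 3"
    by (auto simp: nil_theory_def sq_nil_theory_def sq_nil_word_def)
  show ?thesis
    unfolding branching_isolable_def
  proof (rule bexI[of _ "nil_theory 4"], rule conjI)
    show "\<exists>z1\<in>Com. \<exists>z2\<in>Com. nil_theory 4 \<subseteq> z1 \<and> nil_theory 4 \<subseteq> z2 \<and> \<not> z1 \<subseteq> z2 \<and> \<not> z2 \<subseteq> z1"
      using 1 2 3 eq_theory_nil_theory eq_theory_sq_nil_theory
      by (intro bexI[of _ sq_nil_theory] bexI[of _ "nil_theory 3"] conjI) simp_all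
  qed (simp_all add: isolates_nil_theory_4 eq_theory_nil_theory)
qed

subsection \<open>The abelian atoms are isolated only by chains\<close>

lemma isolates_abelian_theory_square:
  assumes p: "prime p" shows "isolates (abelian_theory (p * p)) (abelian_theory p)"
  unfolding isolates_def
proof (intro conjI allI impI)
  show "abelian_theory (p * p) \<subseteq> abelian_theory p" by (rule abelian_theory_antimono) simp
  have "\<not> p * p dvd p" using prime_ge_2_nat[OF p] by (simp add: dvd_antisym)
  then have "group_identity p \<notin> abelian_theory (p * p)"
    by (simp add: group_identity_mem_abelian_theory_iff)
  then show "abelian_theory (p * p) \<noteq> abelian_theory p"
    using group_identity_mem_abelian_theory_iff[of p p] by auto
  fix b assume b: "Com_atom b \<and> abelian_theory (p * p) \<subseteq> b"
  have g: "group_identity (p * p) \<in> b"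
    using b group_identity_mem_abelian_theory_iff[of "p * p" "p * p"] by auto
  have "group_identity (p * p) \<notin> semilattice_theory" "group_identity (p * p) \<notin> nil_theory 2"
    using prime_gt_0_nat[OF p]
    by (auto simp: group_identity_def semilattice_theory_def nil_theory_def)
  moreover have "q = p" if q: "prime q" "group_identity (p * p) \<in> abelian_theory q" for q
  proof -
    have "q dvd p * p" using q(2) by (simp only: group_identity_mem_abelian_theory_iff)
    then have "q dvd p" using q(1) by (simp add: prime_dvd_mult_iff)
    then show "q = p" using q(1) p by (rule primes_dvd_imp_eq[rotated 2])
  qed
  ultimately show "b = abelian_theory p" using b g unfolding Com_atom_iff by blast
qed

lemma prime_power_if_prime_factors_eq:
  fixes m :: nat
  assumes "prime p" "0 < m" "\<And>q. prime q \<Longrightarrow> q dvd m \<Longrightarrow> q = p"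
  shows "\<exists>k. m = p ^ k"
proof -
  have "m \<noteq> 0" using assms(2) by simp
  moreover have "\<not> is_unit p" using assms(1) not_prime_unit by blast
  ultimately
  obtain r where r: "m = p ^ multiplicity p m * r" "\<not> p dvd r"
    by (rule multiplicity_decompose')
  have "r = 1"
  proof (rule ccontr)
    assume "r \<noteq> 1"
    then obtain q where "prime q" "q dvd r" using prime_factor_nat by blast
    have "q dvd m" using \<open>q dvd r\<close> by (subst r(1)) (rule dvd_mult)
    then have "q = p" using \<open>prime q\<close> assms(3) by blast
    with \<open>q dvd r\<close> r(2) show False by simp
  qed
  with r(1) have "m = p ^ multiplicity p m" by (metis mult.right_neutral)
  then show ?thesis ..
qed

lemma not_branching_isolable_abelian_theory:
  assumes p: "prime p" shows "\<not> branching_isolable (abelian_theory p)"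
proof
  assume "branching_isolable (abelian_theory p)"
  then obtain y z1 z2 where "y \<in> Com" "z1 \<in> Com" "z2 \<in> Com" "isolates y (abelian_theory p)"
    and z: "y \<subseteq> z1" "y \<subseteq> z2" "\<not> z1 \<subseteq> z2" "\<not> z2 \<subseteq> z1"
    unfolding branching_isolable_def by blast
  then have y: "is_eq_theory y" "y \<subseteq> abelian_theory p" "y \<noteq> abelian_theory p"
    and only: "\<And>b. Com_atom b \<Longrightarrow> y \<subseteq> b \<Longrightarrow> b = abelian_theory p"
    and zC: "is_eq_theory z1" "is_eq_theory z2"
    unfolding isolates_def by simp_all
  have "group_identity p \<in> abelian_theory p"
    by (simp add: group_identity_mem_abelian_theory_iff)
  moreover have "group_identity p \<notin> semilattice_theory" "group_identity p \<notin> nil_theory 2"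
    using prime_gt_0_nat[OF p]
      by (auto simp: group_identity_def semilattice_theory_def nil_theory_def)
  ultimately have "semilattice_theory \<noteq> abelian_theory p" "nil_theory 2 \<noteq> abelian_theory p"
    by metis+
  then have "\<not> y \<subseteq> semilattice_theory" "\<not> y \<subseteq> nil_theory 2"
    using only Com_atom_semilattice_theory Com_atom_nil_theory by blast+
  moreover have "y \<noteq> full_theory"
  proof
    assume "y = full_theory"
    with y(2) have "full_theory \<subseteq> abelian_theory p" by simp
    then have "abelian_theory p = full_theory"
      using le_full_theory[OF eq_theory_abelian_theory[OF prime_gt_0_nat[OF p]]]
        by (rule subset_antisym[rotated])
    with full_theory_neq(3)[OF prime_ge_2_nat[OF p]] show False ..
  qed
  ultimately obtain n where "0 < n" "abelian_theory n \<subseteq> y"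
    using abelian_theory_le_if_not_le_semilattice_nil[OF y(1)] by blast
  then obtain m where m: "0 < m" "y = abelian_theory m"
    using abelian_theory_eq_if_le[OF y(1)] by blast
  txt \<open>Every prime factor q of m gives an atom above y, so m is a power of p and the theories
    above y are the abelian theories of the divisors of m, which form a chain.\<close>
  have "q = p" if "prime q" "q dvd m" for q
  proof -
    have "y \<subseteq> abelian_theory q" using m(2) abelian_theory_antimono[OF that(2)] by simp
    then have "abelian_theory q = abelian_theory p"
      using only Com_atom_abelian_theory[OF that(1)] by blast
    then show ?thesis using abelian_theory_prime_inj[OF p that(1)] by blast
  qed
  then obtain k where k: "m = p ^ k" using prime_power_if_prime_factors_eq[OF p m(1)] by blast
  obtain d1 where d1: "z1 = abelian_theory d1" "d1 dvd m"
    using abelian_theory_eq_if_le[OF zC(1) m(1)] z(1) m(2) by blast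
  obtain d2 where d2: "z2 = abelian_theory d2" "d2 dvd m"
    using abelian_theory_eq_if_le[OF zC(2) m(1)] z(2) m(2) by blast
  obtain i j where "d1 = p ^ i" "d2 = p ^ j"
    using d1(2) d2(2) unfolding k divides_primepow_nat[OF p] by blast
  then have "d1 dvd d2 \<or> d2 dvd d1" using le_imp_power_dvd nat_le_linear by blast
  then show False using d1 d2 z(3,4) abelian_theory_antimono by blast
qed

lemma isolable_abelian_theory: "prime p \<Longrightarrow> isolable (abelian_theory p)"
  unfolding isolable_def
  using isolates_abelian_theory_square eq_theory_abelian_theory[of "p * p"] prime_gt_0_nat
  by (metis Com_iff nat_0_less_mult_iff)

lemma Com_atom_not_isolable_iff: "Com_atom x \<and> \<not> isolable x \<longleftrightarrow> x = semilattice_theory"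
  using Com_atom_iff[of x] not_isolable_semilattice_theory isolable_abelian_theory
    branching_isolable_nil_theory isolable_if_branching_isolable
  by blast

lemma Com_atom_branching_isolable_iff: "Com_atom x \<and> branching_isolable x \<longleftrightarrow> x = nil_theory 2"
  using Com_atom_iff[of x] not_isolable_semilattice_theory not_branching_isolable_abelian_theory
    branching_isolable_nil_theory isolable_if_branching_isolable
  by blast

lemma Com_atom_isolable_not_branching_iff:
  "Com_atom x \<and> isolable x \<and> \<not> branching_isolable x \<longleftrightarrow> (\<exists>p. prime p \<and> x = abelian_theory p)"
  using Com_atom_iff[of x] not_isolable_semilattice_theory isolable_abelian_theory
    not_branching_isolable_abelian_theory branching_isolable_nil_theory
  by blast

abbreviation sat :: "(nat \<Rightarrow> identities) \<Rightarrow> lform \<Rightarrow> bool" where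
  "sat \<equiv> fsat Com com_join com_meet"

definition le_form :: "nat \<Rightarrow> nat \<Rightarrow> lform" where
  "le_form a b = FEq (LJoin (LVar a) (LVar b)) (LVar b)"

definition imp_form :: "lform \<Rightarrow> lform \<Rightarrow> lform" where
  "imp_form f g = FOr (FNot f) g"

definition bot_form :: "nat \<Rightarrow> nat \<Rightarrow> lform" where
  "bot_form v w = FAll w (le_form v w)"

definition atom_form :: "nat \<Rightarrow> nat \<Rightarrow> nat \<Rightarrow> lform" where
  "atom_form v w1 w2 =
     FAnd (FNot (bot_form v w1))
       (FAll w1 (imp_form (le_form w1 v) (FOr (bot_form w1 w2) (FEq (LVar w1) (LVar v)))))"

definition isolates_form :: lform where
  "isolates_form =
     FAnd (le_form 0 1) (FAnd (FNot (FEq (LVar 1) (LVar 0)))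
       (FAll 2 (imp_form (FAnd (atom_form 2 3 4) (le_form 2 1)) (FEq (LVar 2) (LVar 0)))))"

definition isolable_form :: lform where
  "isolable_form = FEx 1 isolates_form"

definition branching_isolable_form :: lform where
  "branching_isolable_form =
     FEx 1 (FAnd isolates_form (FEx 2 (FEx 3
       (FAnd (le_form 2 1) (FAnd (le_form 3 1) (FAnd (FNot (le_form 3 2)) (FNot (le_form 2 3))))))))"

lemma sat_le_form [simp]: "sat e (le_form a b) \<longleftrightarrow> e b \<subseteq> e a"
  unfolding le_form_def com_join_def by auto

lemma sat_imp_form [simp]: "sat e (imp_form f g) \<longleftrightarrow> (sat e f \<longrightarrow> sat e g)"
  unfolding imp_form_def by simp

lemma sat_bot_form [simp]:
  assumes "e v \<in> Com" "v \<noteq> w" shows "sat e (bot_form v w) \<longleftrightarrow> e v = full_theory"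
proof -
  have "sat e (bot_form v w) \<longleftrightarrow> (\<forall>a\<in>Com. a \<subseteq> e v)" unfolding bot_form_def using assms(2) by simp
  also have "\<dots> \<longleftrightarrow> e v = full_theory"
    using eq_theory_full_theory le_full_theory assms(1) by (auto simp: Com_def)
  finally show ?thesis .
qed

lemma sat_atom_form [simp]:
  assumes "e v \<in> Com" "w1 \<noteq> v" "w2 \<noteq> v" "w2 \<noteq> w1"
  shows "sat e (atom_form v w1 w2) \<longleftrightarrow> Com_atom (e v)"
  unfolding atom_form_def Com_atom_def using assms by auto

lemma sat_isolates_form [simp]: "sat e isolates_form \<longleftrightarrow> isolates (e 1) (e 0)"
proof -
  have "sat e isolates_form \<longleftrightarrow>
      e 1 \<subseteq> e 0 \<and> e 1 \<noteq> e 0 \<and> (\<forall>b\<in>Com. Com_atom b \<and> e 1 \<subseteq> b \<longrightarrow> b = e 0)"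
    unfolding isolates_form_def by simp
  also have "\<dots> \<longleftrightarrow> isolates (e 1) (e 0)"
    unfolding isolates_def using Com_atom_in_Com by blast
  finally show ?thesis .
qed

lemma sat_isolable_form [simp]: "sat e isolable_form \<longleftrightarrow> isolable (e 0)"
  unfolding isolable_form_def isolable_def by simp

lemma sat_branching_isolable_form [simp]:
  "sat e branching_isolable_form \<longleftrightarrow> branching_isolable (e 0)"
  unfolding branching_isolable_form_def branching_isolable_def by simp

lemma fvars_atom_form: "fvars (atom_form v w1 w2) \<subseteq> {v}"
  unfolding atom_form_def bot_form_def imp_form_def le_form_def by auto

lemma fvars_isolable_form: "fvars isolable_form \<subseteq> {0}"
  using fvars_atom_form[of 2 3 4]
  unfolding isolable_form_def isolates_form_def imp_form_def le_form_def by auto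

lemma fvars_branching_isolable_form: "fvars branching_isolable_form \<subseteq> {0}"
  using fvars_atom_form[of 2 3 4]
  unfolding branching_isolable_form_def isolates_form_def imp_form_def le_form_def by auto

lemma definableI:
  assumes "S \<subseteq> L" "fvars \<phi> \<subseteq> {0}" "\<And>e. \<forall>i. e i \<in> L \<Longrightarrow> fsat L J M e \<phi> \<longleftrightarrow> e 0 \<in> S"
  shows "definable L J M S"
  unfolding definable_def using assms by blast

theorem mainTheorem10:
  shows "definable Com com_join com_meet {A_var p | p::nat. prime p}
       \<and> definable Com com_join com_meet {SL_var}
       \<and> definable Com com_join com_meet {ZM_var}"
proof (intro conjI)
  have "{A_var p | p::nat. prime p} = {abelian_theory p | p. prime p}"
    using A_var_eq prime_gt_0_nat by metis
  moreover have "{abelian_theory p | p. prime p} \<subseteq> Com"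
    using eq_theory_abelian_theory prime_gt_0_nat by auto
  ultimately show "definable Com com_join com_meet {A_var p | p::nat. prime p}"
    using Com_atom_isolable_not_branching_iff
      fvars_atom_form[of 0 1 2] fvars_isolable_form fvars_branching_isolable_form
    by (intro definableI[where
          \<phi> = "FAnd (atom_form 0 1 2) (FAnd isolable_form (FNot branching_isolable_form))"])
       auto
  show "definable Com com_join com_meet {SL_var}"
    unfolding SL_var_eq
    using Com_atom_not_isolable_iff eq_theory_semilattice_theory
      fvars_atom_form[of 0 1 2] fvars_isolable_form
    by (intro definableI[where \<phi> = "FAnd (atom_form 0 1 2) (FNot isolable_form)"]) auto
  show "definable Com com_join com_meet {ZM_var}"
    unfolding ZM_var_eq
    using Com_atom_branching_isolable_iff eq_theory_nil_theory
      fvars_atom_form[of 0 1 2] fvars_branching_isolable_form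
    by (intro definableI[where \<phi> = "FAnd (atom_form 0 1 2) branching_isolable_form"]) auto
qed

end
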